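(* Let $f(X)=N(N-1)\sum_{i=1}^{\ell}\beta_i\,t(H_i,X)$ be a subgraph-counting function. Let $X,Y\in\{0,1\}^n$ differ only in a single index $k$, let $j$ be an index, and let $e_j,e_k$ be the edges (vertex pairs) corresponding to $j,k$. If $e_j$ and $e_k$ share a common vertex, then $$|\partial_jf(X)-\partial_jf(Y)|\le\sum_{i=1}^{\ell}\frac{2|\beta_i|\,|E(H_i)|^2}{\sqrt n}.$$ If $e_j$ and $e_k$ do not share a common vertex, then $$|\partial_jf(X)-\partial_jf(Y)|\le\sum_{i=1}^{\ell}\frac{6|\beta_i|\,|E(H_i)|^2}{n}.$$
   Context: $n=\binom N2$; $X\in\{0,1\}^n$ is identified with a simple graph on $[N]$, coordinates indexed by unordered vertex pairs. For a finite simple graph $H$ on $[m]$, $t(H,X)$ is the number of injective homomorphisms $H\to X$ divided by $N(N-1)\cdots(N-m+1)$. $\partial_jf(X)=\frac12\big(f(X\text{ with coordinate }j\text{ set to }1)-f(X\text{ with coordinate }j\text{ set to }0)\big)$. *)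

theory Defs
  imports Complex_Main "HOL-Library.FuncSet"
begin

text \<open>A point X of {0,1}^n, n = N choose 2, is identified with the set of pairs
  whose coordinate is 1, i.e. a subset of vertex_pairs N.\<close>
definition vertex_pairs :: "nat \<Rightarrow> nat set set" where
  "vertex_pairs N = {e. \<exists>a b. a < N \<and> b < N \<and> a \<noteq> b \<and> e = {a, b}}"

definition inj_homs :: "nat \<Rightarrow> nat set set \<Rightarrow> nat \<Rightarrow> nat set set \<Rightarrow> (nat \<Rightarrow> nat) set" where
  "inj_homs m E N X =
     {\<phi> \<in> {0..<m} \<rightarrow>\<^sub>E {0..<N}. inj_on \<phi> {0..<m} \<and> (\<forall>e\<in>E. \<phi> ` e \<in> X)}"

definition hom_density :: "nat \<Rightarrow> nat set set \<Rightarrow> nat \<Rightarrow> nat set set \<Rightarrow> real" where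
  "hom_density m E N X = real (card (inj_homs m E N X)) / (\<Prod>i<m. (real N - real i))"

definition subgraph_count ::
  "nat \<Rightarrow> nat \<Rightarrow> (nat \<Rightarrow> real) \<Rightarrow> (nat \<Rightarrow> nat) \<Rightarrow> (nat \<Rightarrow> nat set set) \<Rightarrow> nat set set \<Rightarrow> real" where
  "subgraph_count N l \<beta> m E X =
     real N * (real N - 1) * (\<Sum>i=1..l. \<beta> i * hom_density (m i) (E i) N X)"

definition disc_deriv :: "(nat set set \<Rightarrow> real) \<Rightarrow> nat set \<Rightarrow> nat set set \<Rightarrow> real" where
  "disc_deriv F e X = (F (insert e X) - F (X - {e})) / 2"

end

theory Submission
  imports Defs
begin

text \<open>
  Put G = X - {e_j, e_k}. If X and Y differ, then \<partial>_j f(X) - \<partial>_j f(Y) is, up to sign, half the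
  mixed second difference f(G + e_j + e_k) - f(G + e_k) - f(G + e_j) + f(G). By inclusion-exclusion
  this difference counts, for each H_i, the injective copies of H_i in G + e_j + e_k that use both
  e_j and e_k. Such a copy is determined by the two edges a, b of H_i mapped onto e_j and e_k (at most
  |E(H_i)|^2 choices), by its restriction to a \<union> b (at most one choice if e_j and e_k share a vertex,
  at most four otherwise) and by an injective extension to the remaining vertices. With
  s = |e_j \<union> e_k| (3 or 4), the copies therefore have density at most K |E(H_i)|^2 / (N)_s, where
  (N)_s is the falling factorial, and multiplying by N(N-1)/2 gives the two bounds.
\<close>

section \<open>Counting injective maps\<close>

lemma bij_betw_restrict_inj_extensions:
  assumes "S \<subseteq> D" "inj_on \<psi> S" "\<psi> ` S \<subseteq> R"
  shows "bij_betw (\<lambda>\<phi>. restrict \<phi> (D - S))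
    {\<phi> \<in> D \<rightarrow>\<^sub>E R. inj_on \<phi> D \<and> (\<forall>t\<in>S. \<phi> t = \<psi> t)}
    {g \<in> (D - S) \<rightarrow>\<^sub>E (R - \<psi> ` S). inj_on g (D - S)}"
    (is "bij_betw _ ?L ?M")
proof (rule bij_betw_byWitness[where f' = "\<lambda>g t. if t \<in> S then \<psi> t else g t"])
  show "\<forall>\<phi>\<in>?L. (\<lambda>t. if t \<in> S then \<psi> t else restrict \<phi> (D - S) t) = \<phi>"
    by (auto simp: PiE_def extensional_def)
  show "\<forall>g\<in>?M. restrict (\<lambda>t. if t \<in> S then \<psi> t else g t) (D - S) = g"
    by (auto simp: PiE_def extensional_def)
  show "(\<lambda>\<phi>. restrict \<phi> (D - S)) ` ?L \<subseteq> ?M"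
  proof
    fix g assume "g \<in> (\<lambda>\<phi>. restrict \<phi> (D - S)) ` ?L"
    then obtain \<phi> where \<phi>: "\<phi> \<in> ?L" and g: "g = restrict \<phi> (D - S)" by blast
    have "\<phi> x \<notin> \<psi> ` S" if "x \<in> D - S" for x
    proof
      assume "\<phi> x \<in> \<psi> ` S"
      then obtain y where "y \<in> S" "\<phi> x = \<phi> y" using \<phi> by auto
      moreover have "inj_on \<phi> D" using \<phi> by simp
      ultimately show False using that \<open>S \<subseteq> D\<close> by (auto dest: inj_onD)
    qed
    with \<phi> show "g \<in> ?M" unfolding g by (auto simp: inj_on_def)
  qed
  show "(\<lambda>g t. if t \<in> S then \<psi> t else g t) ` ?M \<subseteq> ?L"
  proof
    fix h assume "h \<in> (\<lambda>g t. if t \<in> S then \<psi> t else g t) ` ?M"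
    then obtain g where g: "g \<in> ?M" and h: "h = (\<lambda>t. if t \<in> S then \<psi> t else g t)" by blast
    have "h \<in> D \<rightarrow>\<^sub>E R"
      using g assms(1,3) unfolding h by (auto simp: PiE_iff extensional_def)
    moreover have "inj_on h D"
    proof (rule inj_onI)
      fix x y assume xy: "x \<in> D" "y \<in> D" "h x = h y"
      have "inj_on g (D - S)" "\<forall>t\<in>D - S. \<forall>s\<in>S. g t \<noteq> \<psi> s" using g by auto
      with xy \<open>inj_on \<psi> S\<close> show "x = y" unfolding h
        by (cases "x \<in> S"; cases "y \<in> S") (force dest: inj_onD)+
    qed
    ultimately show "h \<in> ?L" unfolding h by auto
  qed
qed

lemma card_inj_extensions:
  assumes "finite D" "finite R" "S \<subseteq> D" "inj_on \<psi> S" "\<psi> ` S \<subseteq> R"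
  shows "card {\<phi> \<in> D \<rightarrow>\<^sub>E R. inj_on \<phi> D \<and> (\<forall>t\<in>S. \<phi> t = \<psi> t)}
         = (\<Prod>i<card D - card S. card R - card S - i)"
proof -
  have "card {\<phi> \<in> D \<rightarrow>\<^sub>E R. inj_on \<phi> D \<and> (\<forall>t\<in>S. \<phi> t = \<psi> t)}
      = card {g \<in> (D - S) \<rightarrow>\<^sub>E (R - \<psi> ` S). inj_on g (D - S)}"
    using bij_betw_restrict_inj_extensions[OF assms(3-5)] by (rule bij_betw_same_card)
  also have "\<dots> = (\<Prod>i<card (D - S). card (R - \<psi> ` S) - i)"
    using card_inj_on_subset_funcset[of "D - S" "R - \<psi> ` S" "D - S"] assms(1,2)
    by (simp add: atLeast0LessThan)
  also have "\<dots> = (\<Prod>i<card D - card S. card R - card S - i)"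
    using assms by (simp add: card_Diff_subset card_image finite_subset)
  finally show ?thesis .
qed

lemma card_le_card_restrict_mult:
  assumes "finite D" "finite R" "S \<subseteq> D" "C \<subseteq> {\<phi> \<in> D \<rightarrow>\<^sub>E R. inj_on \<phi> D}"
  shows "card C \<le> card ((\<lambda>\<phi>. restrict \<phi> S) ` C) * (\<Prod>i<card D - card S. card R - card S - i)"
proof -
  define Ext where "Ext \<psi> = {\<phi> \<in> D \<rightarrow>\<^sub>E R. inj_on \<phi> D \<and> (\<forall>t\<in>S. \<phi> t = \<psi> t)}" for \<psi>
  let ?\<Psi> = "(\<lambda>\<phi>. restrict \<phi> S) ` C"
  have fin_PiE: "finite (D \<rightarrow>\<^sub>E R)" using assms(1,2) by (rule finite_PiE)
  have "finite C" using assms(4) by (rule finite_subset) (use fin_PiE in auto)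
  have card_Ext: "card (Ext \<psi>) = (\<Prod>i<card D - card S. card R - card S - i)" if \<psi>: "\<psi> \<in> ?\<Psi>" for \<psi>
  proof -
    obtain \<phi> where "\<phi> \<in> C" and \<psi>_eq: "\<psi> = restrict \<phi> S" using \<psi> by blast
    then have "\<phi> \<in> D \<rightarrow>\<^sub>E R" "inj_on \<phi> D" using assms(4) by auto
    then have "inj_on \<phi> S" "\<phi> ` S \<subseteq> R" using assms(3) by (auto intro: inj_on_subset)
    moreover have "Ext \<psi> = {\<phi>' \<in> D \<rightarrow>\<^sub>E R. inj_on \<phi>' D \<and> (\<forall>t\<in>S. \<phi>' t = \<phi> t)}"
      unfolding Ext_def \<psi>_eq by auto
    ultimately show ?thesis using card_inj_extensions assms(1-3) by simp
  qed
  have "C \<subseteq> (\<Union>\<psi>\<in>?\<Psi>. Ext \<psi>)"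
    unfolding Ext_def using assms(4) by fastforce
  then have "card C \<le> card (\<Union>\<psi>\<in>?\<Psi>. Ext \<psi>)"
    by (rule card_mono[rotated]) (auto simp: Ext_def intro: finite_subset[OF _ fin_PiE])
  also have "\<dots> \<le> (\<Sum>\<psi>\<in>?\<Psi>. card (Ext \<psi>))"
    by (rule card_UN_le) (use \<open>finite C\<close> in simp)
  also have "\<dots> = card ?\<Psi> * (\<Prod>i<card D - card S. card R - card S - i)"
    using card_Ext by simp
  finally show ?thesis .
qed

lemma card_Collect_split:
  assumes "finite A"
  shows "card A = card {x \<in> A. \<not> P x} + card {x \<in> A. P x}"
proof -
  have "card A = card ({x \<in> A. \<not> P x} \<union> {x \<in> A. P x})" by (rule arg_cong[where f = card]) blast
  also have "\<dots> = card {x \<in> A. \<not> P x} + card {x \<in> A. P x}"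
    by (rule card_Un_disjoint) (use assms in auto)
  finally show ?thesis .
qed

lemma prod_diff_lessThan_split:
  fixes x :: real
  assumes "s \<le> m"
  shows "(\<Prod>i<m. x - real i) = (\<Prod>i<s. x - real i) * (\<Prod>i<m - s. x - real s - real i)"
proof -
  obtain d where "m = s + d" using assms le_Suc_ex by blast
  then show ?thesis
    by (induction d arbitrary: m) (simp_all add: algebra_simps)
qed

lemma prod_diff_lessThan_nonneg: "0 \<le> (\<Prod>i<m. real N - real i)"
proof (cases "m \<le> N")
  case True
  then show ?thesis by (intro prod_nonneg) auto
next
  case False
  then have "N \<in> {..<m}" by simp
  then show ?thesis by (simp add: prod_zero)
qed

lemma prod_diff_lessThan_pos: "m \<le> N \<Longrightarrow> 0 < (\<Prod>i<m. real N - real i)"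
  by (intro prod_pos) auto

lemma card_2_other_eq:
  assumes "card e = 2" "z \<in> e" "u \<in> e" "v \<in> e" "u \<noteq> z" "v \<noteq> z"
  shows "u = v"
  using assms by (auto simp: card_2_iff)

lemma card_2_Int_eq:
  assumes "card e = 2" "card e' = 2" "e \<noteq> e'" "u \<in> e \<inter> e'" "v \<in> e \<inter> e'"
  shows "u = v"
  using assms by (auto simp: card_2_iff)

lemma card_2_Diff_eq:
  assumes "card e = 2" "card e' = 2" "e \<inter> e' \<noteq> {}" "u \<in> e - e'" "v \<in> e - e'"
  shows "u = v"
  using assms by (auto simp: card_2_iff)

lemma card_Un_card_2_Int_nonempty:
  assumes "card e = 2" "card e' = 2" "e \<noteq> e'" "e \<inter> e' \<noteq> {}"
  shows "card (e \<union> e') = 3"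
proof -
  obtain u where u: "u \<in> e \<inter> e'" using assms(4) by blast
  then have "e \<inter> e' = {u}" using card_2_Int_eq[OF assms(1-3)] by blast
  moreover have "finite e" "finite e'" using assms(1,2) by (auto intro: card_ge_0_finite)
  ultimately show ?thesis using card_Un_Int[of e e'] assms(1,2) by simp
qed

lemma card_Un_card_2_disjoint:
  assumes "card e = 2" "card e' = 2" "e \<inter> e' = {}"
  shows "card (e \<union> e') = 4"
proof -
  have "finite e" "finite e'" using assms(1,2) by (auto intro: card_ge_0_finite)
  then show ?thesis using card_Un_disjoint assms by fastforce
qed

lemma vertex_pairs_card: "e \<in> vertex_pairs N \<Longrightarrow> card e = 2"
  unfolding vertex_pairs_def by auto

lemma vertex_pairs_subset: "e \<in> vertex_pairs N \<Longrightarrow> e \<subseteq> {0..<N}"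
  unfolding vertex_pairs_def by auto

section \<open>Injections with prescribed images of two edges\<close>

definition pinned_injections ::
  "'a set \<Rightarrow> 'b set \<Rightarrow> 'a set \<Rightarrow> 'a set \<Rightarrow> 'b set \<Rightarrow> 'b set \<Rightarrow> ('a \<Rightarrow> 'b) set" where
  "pinned_injections D R a b e e' = {\<phi> \<in> D \<rightarrow>\<^sub>E R. inj_on \<phi> D \<and> \<phi> ` a = e \<and> \<phi> ` b = e'}"

lemma pinned_injections_regions:
  assumes "\<phi> \<in> pinned_injections D R a b e e'" "a \<subseteq> D" "b \<subseteq> D"
  shows "t \<in> a \<inter> b \<Longrightarrow> \<phi> t \<in> e \<inter> e'"
    and "t \<in> a - b \<Longrightarrow> \<phi> t \<in> e - e'"
    and "t \<in> b - a \<Longrightarrow> \<phi> t \<in> e' - e"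
proof -
  have inj: "inj_on \<phi> D" and e: "e = \<phi> ` a" and e': "e' = \<phi> ` b"
    using assms(1) unfolding pinned_injections_def by auto
  show "t \<in> a \<inter> b \<Longrightarrow> \<phi> t \<in> e \<inter> e'" unfolding e e' by blast
  show "t \<in> a - b \<Longrightarrow> \<phi> t \<in> e - e'" "t \<in> b - a \<Longrightarrow> \<phi> t \<in> e' - e"
    unfolding e e' using inj assms(2,3) by (auto dest: inj_onD)
qed

lemma restrict_pinned_injections_eq_of_Int_nonempty:
  assumes "card e = 2" "card e' = 2" "e \<noteq> e'" "e \<inter> e' \<noteq> {}" "a \<subseteq> D" "b \<subseteq> D"
    and "\<phi>\<^sub>1 \<in> pinned_injections D R a b e e'" "\<phi>\<^sub>2 \<in> pinned_injections D R a b e e'"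
  shows "restrict \<phi>\<^sub>1 (a \<union> b) = restrict \<phi>\<^sub>2 (a \<union> b)"
proof (rule restrict_ext)
  fix t assume "t \<in> a \<union> b"
  note r\<^sub>1 = pinned_injections_regions[OF assms(7) assms(5,6)]
    and r\<^sub>2 = pinned_injections_regions[OF assms(8) assms(5,6)]
  have "e' \<inter> e \<noteq> {}" using assms(4) by blast
  consider "t \<in> a \<inter> b" | "t \<in> a - b" | "t \<in> b - a" using \<open>t \<in> a \<union> b\<close> by blast
  then show "\<phi>\<^sub>1 t = \<phi>\<^sub>2 t"
  proof cases
    case 1
    then show ?thesis using r\<^sub>1(1) r\<^sub>2(1) card_2_Int_eq[OF assms(1-3)] by blast
  next
    case 2
    then show ?thesis using r\<^sub>1(2) r\<^sub>2(2) card_2_Diff_eq[OF assms(1,2,4)] by blast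
  next
    case 3
    then show ?thesis using r\<^sub>1(3) r\<^sub>2(3) card_2_Diff_eq[OF assms(2,1) \<open>e' \<inter> e \<noteq> {}\<close>] by blast
  qed
qed

lemma card_restrict_pinned_injections_le_1:
  assumes "card e = 2" "card e' = 2" "e \<noteq> e'" "e \<inter> e' \<noteq> {}" "a \<subseteq> D" "b \<subseteq> D"
  shows "card ((\<lambda>\<phi>. restrict \<phi> (a \<union> b)) ` pinned_injections D R a b e e') \<le> 1"
    (is "card ?I \<le> 1")
proof (cases "pinned_injections D R a b e e' = {}")
  case False
  then obtain \<phi> where "\<phi> \<in> pinned_injections D R a b e e'" by blast
  with restrict_pinned_injections_eq_of_Int_nonempty[OF assms]
  have "?I \<subseteq> {restrict \<phi> (a \<union> b)}" by blast
  then have "card ?I \<le> card {restrict \<phi> (a \<union> b)}" by (rule card_mono[rotated]) simp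
  then show ?thesis by simp
qed simp

lemma inj_on_agree_of_card_2_image:
  assumes "inj_on \<phi>\<^sub>1 D" "inj_on \<phi>\<^sub>2 D" "c \<subseteq> D" "\<phi>\<^sub>1 ` c = f" "\<phi>\<^sub>2 ` c = f" "card f = 2"
    and "q \<in> c" "t \<in> c" "\<phi>\<^sub>1 q = \<phi>\<^sub>2 q"
  shows "\<phi>\<^sub>1 t = \<phi>\<^sub>2 t"
proof (cases "t = q")
  case False
  then have "\<phi>\<^sub>1 t \<noteq> \<phi>\<^sub>1 q" "\<phi>\<^sub>2 t \<noteq> \<phi>\<^sub>2 q"
    using assms(1-3,7,8) by (auto dest: inj_onD)
  moreover have "\<phi>\<^sub>1 q \<in> f" "\<phi>\<^sub>1 t \<in> f" "\<phi>\<^sub>2 t \<in> f" using assms(4,5,7,8) by auto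
  ultimately show ?thesis using card_2_other_eq[OF assms(6)] assms(9) by metis
qed (use assms(9) in simp)

lemma restrict_pinned_injections_eq_of_agree:
  assumes "card e = 2" "card e' = 2" "p \<in> a" "w \<in> b" "a \<subseteq> D" "b \<subseteq> D"
    and "\<phi>\<^sub>1 \<in> pinned_injections D R a b e e'" "\<phi>\<^sub>2 \<in> pinned_injections D R a b e e'"
    and "\<phi>\<^sub>1 p = \<phi>\<^sub>2 p" "\<phi>\<^sub>1 w = \<phi>\<^sub>2 w"
  shows "restrict \<phi>\<^sub>1 (a \<union> b) = restrict \<phi>\<^sub>2 (a \<union> b)"
proof (rule restrict_ext)
  fix t assume "t \<in> a \<union> b"
  have inj: "inj_on \<phi>\<^sub>1 D" "inj_on \<phi>\<^sub>2 D"
    and im: "\<phi>\<^sub>1 ` a = e" "\<phi>\<^sub>2 ` a = e" "\<phi>\<^sub>1 ` b = e'" "\<phi>\<^sub>2 ` b = e'"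
    using assms(7,8) unfolding pinned_injections_def by auto
  show "\<phi>\<^sub>1 t = \<phi>\<^sub>2 t"
  proof (cases "t \<in> a")
    case True
    show ?thesis by (rule inj_on_agree_of_card_2_image[OF inj assms(5) im(1,2) assms(1,3) True assms(9)])
  next
    case False
    then have "t \<in> b" using \<open>t \<in> a \<union> b\<close> by blast
    show ?thesis by (rule inj_on_agree_of_card_2_image[OF inj assms(6) im(3,4) assms(2,4) \<open>t \<in> b\<close> assms(10)])
  qed
qed

lemma card_restrict_pinned_injections_le_4:
  assumes "card e = 2" "card e' = 2" "p \<in> a" "w \<in> b" "a \<subseteq> D" "b \<subseteq> D"
  shows "card ((\<lambda>\<phi>. restrict \<phi> (a \<union> b)) ` pinned_injections D R a b e e') \<le> 4"
    (is "card ?I \<le> 4")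
proof -
  have "inj_on (\<lambda>\<psi>. (\<psi> p, \<psi> w)) ?I"
  proof (rule inj_onI)
    fix \<psi>\<^sub>1 \<psi>\<^sub>2 assume "\<psi>\<^sub>1 \<in> ?I" "\<psi>\<^sub>2 \<in> ?I" and pw: "(\<psi>\<^sub>1 p, \<psi>\<^sub>1 w) = (\<psi>\<^sub>2 p, \<psi>\<^sub>2 w)"
    then obtain \<phi>\<^sub>1 \<phi>\<^sub>2
      where \<phi>: "\<phi>\<^sub>1 \<in> pinned_injections D R a b e e'" "\<phi>\<^sub>2 \<in> pinned_injections D R a b e e'"
      and \<psi>: "\<psi>\<^sub>1 = restrict \<phi>\<^sub>1 (a \<union> b)" "\<psi>\<^sub>2 = restrict \<phi>\<^sub>2 (a \<union> b)"
      by blast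
    have "\<phi>\<^sub>1 p = \<phi>\<^sub>2 p" "\<phi>\<^sub>1 w = \<phi>\<^sub>2 w"
      using pw assms(3,4) unfolding \<psi> by (auto simp: restrict_apply')
    then show "\<psi>\<^sub>1 = \<psi>\<^sub>2" unfolding \<psi> by (rule restrict_pinned_injections_eq_of_agree[OF assms \<phi>])
  qed
  moreover have "(\<lambda>\<psi>. (\<psi> p, \<psi> w)) ` ?I \<subseteq> e \<times> e'"
    using assms(3,4) unfolding pinned_injections_def by auto
  moreover have "finite e" "finite e'" using assms(1,2) by (auto intro: card_ge_0_finite)
  ultimately have "card ?I \<le> card (e \<times> e')" by (intro card_inj_on_le) auto
  also have "\<dots> = 4" using assms(1,2) by (simp add: card_cartesian_product)
  finally show ?thesis .
qed

lemma card_pinned_injections_le: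
  assumes "finite D" "finite R" "a \<subseteq> D" "b \<subseteq> D"
  shows "card (pinned_injections D R a b e e')
    \<le> card ((\<lambda>\<phi>. restrict \<phi> (a \<union> b)) ` pinned_injections D R a b e e')
      * (\<Prod>i<card D - card (e \<union> e'). card R - card (e \<union> e') - i)"
proof (cases "pinned_injections D R a b e e' = {}")
  case False
  then obtain \<phi> where "\<phi> \<in> pinned_injections D R a b e e'" by blast
  then have "inj_on \<phi> (a \<union> b)" "\<phi> ` (a \<union> b) = e \<union> e'"
    using assms(3,4) unfolding pinned_injections_def by (auto intro: inj_on_subset)
  then have "card (a \<union> b) = card (e \<union> e')" by (metis card_image)
  moreover have "pinned_injections D R a b e e' \<subseteq> {\<phi> \<in> D \<rightarrow>\<^sub>E R. inj_on \<phi> D}"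
    unfolding pinned_injections_def by blast
  ultimately show ?thesis
    using card_le_card_restrict_mult[of D R "a \<union> b"] assms by simp
qed simp

section \<open>Homomorphisms through two given edges\<close>

lemma finite_inj_homs: "finite (inj_homs m E N X)"
  unfolding inj_homs_def
  by (rule finite_subset[OF _ finite_PiE[of "{0..<m}" "\<lambda>_. {0..<N}"]]) auto

lemma inj_homs_insert_avoiding:
  assumes "e \<notin> S"
  shows "{\<phi> \<in> inj_homs m E N (insert e S). \<not> (\<exists>a\<in>E. \<phi> ` a = e)} = inj_homs m E N S"
  using assms unfolding inj_homs_def by auto

lemma card_inj_homs_insert:
  assumes "e \<notin> S"
  shows "card (inj_homs m E N (insert e S))
    = card (inj_homs m E N S) + card {\<phi> \<in> inj_homs m E N (insert e S). \<exists>a\<in>E. \<phi> ` a = e}"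
  using card_Collect_split[OF finite_inj_homs, of m E N "insert e S" "\<lambda>\<phi>. \<exists>a\<in>E. \<phi> ` a = e"]
  unfolding inj_homs_insert_avoiding[OF assms] .

definition inj_homs_through ::
  "nat \<Rightarrow> nat set set \<Rightarrow> nat \<Rightarrow> nat set set \<Rightarrow> nat set \<Rightarrow> nat set \<Rightarrow> (nat \<Rightarrow> nat) set" where
  "inj_homs_through m E N X e e' =
     {\<phi> \<in> inj_homs m E N X. (\<exists>a\<in>E. \<phi> ` a = e) \<and> (\<exists>b\<in>E. \<phi> ` b = e')}"

lemma card_inj_homs_mixed_diff:
  assumes "e \<noteq> e'" "e \<notin> G" "e' \<notin> G"
  shows "real (card (inj_homs m E N (insert e (insert e' G)))) - real (card (inj_homs m E N (insert e' G)))
      - real (card (inj_homs m E N (insert e G))) + real (card (inj_homs m E N G))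
    = real (card (inj_homs_through m E N (insert e (insert e' G)) e e'))"
proof -
  let ?T = "inj_homs m E N (insert e (insert e' G))"
  let ?hits = "\<lambda>\<phi> f. \<exists>a\<in>E. \<phi> ` a = f"
  have "card ?T = card (inj_homs m E N (insert e' G)) + card {\<phi> \<in> ?T. ?hits \<phi> e}"
    using assms(1,2) by (intro card_inj_homs_insert) auto
  moreover have "card {\<phi> \<in> ?T. ?hits \<phi> e}
      = card {\<phi> \<in> ?T. ?hits \<phi> e \<and> \<not> ?hits \<phi> e'} + card (inj_homs_through m E N (insert e (insert e' G)) e e')"
    using card_Collect_split[of "{\<phi> \<in> ?T. ?hits \<phi> e}" "\<lambda>\<phi>. ?hits \<phi> e'"] finite_inj_homs
    unfolding inj_homs_through_def mem_Collect_eq conj_assoc by simp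
  moreover have "{\<phi> \<in> ?T. ?hits \<phi> e \<and> \<not> ?hits \<phi> e'} = {\<phi> \<in> inj_homs m E N (insert e G). ?hits \<phi> e}"
  proof -
    have "{\<phi> \<in> ?T. \<not> ?hits \<phi> e'} = inj_homs m E N (insert e G)"
      using inj_homs_insert_avoiding[of e' "insert e G"] assms(1,3) by (simp add: insert_commute)
    then show ?thesis by blast
  qed
  moreover have "card (inj_homs m E N (insert e G))
      = card (inj_homs m E N G) + card {\<phi> \<in> inj_homs m E N (insert e G). ?hits \<phi> e}"
    using assms(2) by (rule card_inj_homs_insert)
  ultimately show ?thesis by simp
qed

lemma card_inj_homs_through_le:
  assumes E: "E \<subseteq> vertex_pairs m"
    and K: "\<And>a b. a \<in> E \<Longrightarrow> b \<in> E \<Longrightarrow>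
      card ((\<lambda>\<phi>. restrict \<phi> (a \<union> b)) ` pinned_injections {0..<m} {0..<N} a b e e') \<le> K"
  shows "card (inj_homs_through m E N X e e')
    \<le> card E ^ 2 * K * (\<Prod>i<m - card (e \<union> e'). N - card (e \<union> e') - i)"
proof -
  let ?F = "\<Prod>i<m - card (e \<union> e'). N - card (e \<union> e') - i"
  let ?P = "\<lambda>(a, b). pinned_injections {0..<m} {0..<N} a b e e'"
  have "finite E" using E vertex_pairs_subset by (blast intro: finite_subset[of _ "Pow {0..<m}"])
  have card_P: "card (?P (a, b)) \<le> K * ?F" if "a \<in> E" "b \<in> E" for a b
  proof -
    have "a \<subseteq> {0..<m}" "b \<subseteq> {0..<m}" using that E vertex_pairs_subset by blast+
    then have "card (?P (a, b)) \<le> card ((\<lambda>\<phi>. restrict \<phi> (a \<union> b)) ` ?P (a, b)) * ?F"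
      using card_pinned_injections_le[of "{0..<m}" "{0..<N}" a b e e'] by simp
    also have "\<dots> \<le> K * ?F" using K[OF that] by simp
    finally show ?thesis .
  qed
  have "inj_homs_through m E N X e e' \<subseteq> (\<Union>ab\<in>E \<times> E. ?P ab)"
    unfolding inj_homs_through_def inj_homs_def pinned_injections_def by blast
  then have "card (inj_homs_through m E N X e e')
      \<le> card (\<Union>ab\<in>E \<times> E. ?P ab)"
    by (rule card_mono[rotated])
      (auto simp: pinned_injections_def intro: finite_subset[OF _ finite_PiE[of "{0..<m}" "\<lambda>_. {0..<N}"]])
  also have "\<dots> \<le> (\<Sum>ab\<in>E \<times> E. card (?P ab))"
    by (rule card_UN_le) (use \<open>finite E\<close> in simp)
  also have "\<dots> \<le> (\<Sum>ab\<in>E \<times> E. K * ?F)"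
    by (rule sum_mono) (use card_P in auto)
  also have "\<dots> = card E ^ 2 * K * ?F"
    by (simp add: card_cartesian_product power2_eq_square)
  finally show ?thesis .
qed

lemma inj_homs_through_nonempty_bounds:
  assumes "E \<subseteq> vertex_pairs m" "inj_homs_through m E N X e e' \<noteq> {}"
  shows "card (e \<union> e') \<le> m" "m \<le> N"
proof -
  obtain \<phi> a b where \<phi>: "\<phi> \<in> {0..<m} \<rightarrow>\<^sub>E {0..<N}" "inj_on \<phi> {0..<m}"
    and ab: "a \<in> E" "b \<in> E" "\<phi> ` a = e" "\<phi> ` b = e'"
    using assms(2) unfolding inj_homs_through_def inj_homs_def by blast
  show "m \<le> N" using card_inj[of \<phi> "{0..<m}" "{0..<N}"] \<phi> by (auto simp: PiE_iff)
  have "a \<union> b \<subseteq> {0..<m}" using ab(1,2) assms(1) vertex_pairs_subset by blast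
  then have "card (\<phi> ` (a \<union> b)) \<le> card {0..<m}"
    using card_image_le card_mono finite_subset by (metis finite_atLeastLessThan le_trans)
  then show "card (e \<union> e') \<le> m" using ab(3,4) by (simp add: image_Un)
qed

lemma inj_homs_through_density_le:
  assumes E: "E \<subseteq> vertex_pairs m" and e: "e \<in> vertex_pairs N" and e': "e' \<in> vertex_pairs N"
    and K: "\<And>a b. a \<in> E \<Longrightarrow> b \<in> E \<Longrightarrow>
      card ((\<lambda>\<phi>. restrict \<phi> (a \<union> b)) ` pinned_injections {0..<m} {0..<N} a b e e') \<le> K"
  shows "real (card (inj_homs_through m E N X e e'))
           / (\<Prod>i<m. real N - real i)
    \<le> real (card E) ^ 2 * real K / (\<Prod>i<card (e \<union> e'). real N - real i)"
proof -
  let ?H = "inj_homs_through m E N X e e'"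
  define s where "s = card (e \<union> e')"
  have "e \<union> e' \<subseteq> {0..<N}" using e e' vertex_pairs_subset by blast
  then have "s \<le> N" unfolding s_def using card_mono[of "{0..<N}" "e \<union> e'"] by simp
  then have pos_s: "0 < (\<Prod>i<s. real N - real i)" by (rule prod_diff_lessThan_pos)
  show ?thesis
  proof (cases "?H = {}")
    case False
    with E have "s \<le> m" "m \<le> N" unfolding s_def by (rule inj_homs_through_nonempty_bounds)+
    define F where "F = (\<Prod>i<m - s. real N - real s - real i)"
    have F: "F = real (\<Prod>i<m - s. N - s - i)"
      unfolding F_def of_nat_prod using \<open>m \<le> N\<close> by (intro prod.cong) auto
    have "0 < F" unfolding F_def using \<open>m \<le> N\<close> by (intro prod_pos) auto
    have "card ?H \<le> card E ^ 2 * K * (\<Prod>i<m - s. N - s - i)"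
      using card_inj_homs_through_le[OF E K, of X] unfolding s_def .
    then have "real (card ?H) \<le> real (card E ^ 2 * K * (\<Prod>i<m - s. N - s - i))"
      by (rule of_nat_mono)
    then have "real (card ?H) \<le> real (card E) ^ 2 * real K * F"
      unfolding F by simp
    moreover have "(\<Prod>i<m. real N - real i) = (\<Prod>i<s. real N - real i) * F"
      unfolding F_def using \<open>s \<le> m\<close> by (rule prod_diff_lessThan_split)
    ultimately show ?thesis
      using pos_s \<open>0 < F\<close> unfolding s_def by (simp add: divide_simps)
  next
    case True
    show ?thesis unfolding True using pos_s s_def by simp
  qed
qed

section \<open>Density bounds\<close>

lemma real_choose_two: "real (N choose 2) = real N * (real N - 1) / 2"
proof -
  have "even (N * (N - 1))" by (cases "even N") auto
  then have "2 * (N choose 2) = N * (N - 1)" unfolding choose_two by simp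
  then have "2 * real (N choose 2) = real N * real (N - 1)" by (metis of_nat_mult of_nat_numeral)
  then show ?thesis by (cases N) auto
qed

lemma shared_vertex_normalization:
  fixes x c :: real
  assumes "3 \<le> x" "0 \<le> c"
  shows "x * (x - 1) / 2 * (c / (x * (x - 1) * (x - 2))) \<le> 2 * c / sqrt (x * (x - 1) / 2)"
proof -
  have "(4 * (x - 2)) ^ 2 - x * (x - 1) / 2 = 31 / 2 * (x - 3) ^ 2 + 59 / 2 * x - 151 / 2"
    by (simp add: power2_eq_square field_simps)
  then have "x * (x - 1) / 2 \<le> (4 * (x - 2)) ^ 2"
    using assms(1) zero_le_power2[of "x - 3"] by linarith
  then have "sqrt (x * (x - 1) / 2) \<le> 4 * (x - 2)"
    using assms(1) by (intro real_le_lsqrt) auto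
  moreover have "0 < sqrt (x * (x - 1) / 2)" using assms(1) by simp
  ultimately have "2 * c / (4 * (x - 2)) \<le> 2 * c / sqrt (x * (x - 1) / 2)"
    using assms by (intro divide_left_mono mult_pos_pos) auto
  moreover have "x * (x - 1) / 2 * (c / (x * (x - 1) * (x - 2))) = 2 * c / (4 * (x - 2))"
  proof -
    have "\<And>a d. a \<noteq> 0 \<Longrightarrow> d \<noteq> 0 \<Longrightarrow> a / 2 * (c / (a * d)) = 2 * c / (4 * d)"
      by (simp add: field_simps)
    moreover have "x * (x - 1) \<noteq> 0" "x - 2 \<noteq> 0" using assms(1) by auto
    ultimately show ?thesis by blast
  qed
  ultimately show ?thesis by simp
qed

lemma disjoint_normalization:
  fixes x c :: real
  assumes "4 \<le> x" "0 \<le> c"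
  shows "x * (x - 1) / 2 * (c * 4 / (x * (x - 1) * ((x - 2) * (x - 3)))) \<le> 6 * c / (x * (x - 1) / 2)"
proof -
  have "3 * ((x - 2) * (x - 3)) - x * (x - 1) / 2 = 5 / 2 * (x - 4) ^ 2 + 11 / 2 * x - 22"
    by (simp add: power2_eq_square field_simps)
  then have "x * (x - 1) / 2 \<le> 3 * ((x - 2) * (x - 3))"
    using assms(1) zero_le_power2[of "x - 4"] by linarith
  then have "6 * c / (3 * ((x - 2) * (x - 3))) \<le> 6 * c / (x * (x - 1) / 2)"
    using assms by (intro divide_left_mono) auto
  moreover have "x * (x - 1) / 2 * (c * 4 / (x * (x - 1) * ((x - 2) * (x - 3))))
      = 6 * c / (3 * ((x - 2) * (x - 3)))"
  proof -
    have "\<And>a d. a \<noteq> 0 \<Longrightarrow> d \<noteq> 0 \<Longrightarrow> a / 2 * (c * 4 / (a * d)) = 6 * c / (3 * d)"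
      by (simp add: field_simps)
    moreover have "x * (x - 1) \<noteq> 0" "(x - 2) * (x - 3) \<noteq> 0" using assms(1) by auto
    ultimately show ?thesis by blast
  qed
  ultimately show ?thesis by simp
qed

lemma inj_homs_through_density_shared_vertex:
  assumes E: "E \<subseteq> vertex_pairs m" and e: "e \<in> vertex_pairs N" and e': "e' \<in> vertex_pairs N"
    and "e \<noteq> e'" "e \<inter> e' \<noteq> {}"
  shows "real N * (real N - 1) / 2 * (real (card (inj_homs_through m E N X e e')) / (\<Prod>i<m. real N - real i))
    \<le> 2 * real (card E) ^ 2 / sqrt (real (N choose 2))"
proof -
  have card_e: "card e = 2" "card e' = 2" using e e' by (auto intro: vertex_pairs_card)
  then have three: "card (e \<union> e') = 3" using assms(4,5) by (rule card_Un_card_2_Int_nonempty)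
  have "e \<union> e' \<subseteq> {0..<N}" using e e' vertex_pairs_subset by blast
  then have "3 \<le> N" using card_mono[of "{0..<N}" "e \<union> e'"] three by simp
  have "card ((\<lambda>\<phi>. restrict \<phi> (a \<union> b)) ` pinned_injections {0..<m} {0..<N} a b e e') \<le> 1"
    if "a \<in> E" "b \<in> E" for a b
  proof -
    have "a \<subseteq> {0..<m}" "b \<subseteq> {0..<m}" using that E by (auto dest: vertex_pairs_subset)
    then show ?thesis by (rule card_restrict_pinned_injections_le_1[OF card_e assms(4,5)])
  qed
  from inj_homs_through_density_le[OF E e e' this, of X]
  have "real (card (inj_homs_through m E N X e e')) / (\<Prod>i<m. real N - real i)
      \<le> real (card E) ^ 2 / (real N * (real N - 1) * (real N - 2))"
    unfolding three by (simp add: numeral_3_eq_3)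
  moreover have "0 \<le> real N * (real N - 1) / 2" using \<open>3 \<le> N\<close> by simp
  ultimately have "real N * (real N - 1) / 2 * (real (card (inj_homs_through m E N X e e')) / (\<Prod>i<m. real N - real i))
      \<le> real N * (real N - 1) / 2 * (real (card E) ^ 2 / (real N * (real N - 1) * (real N - 2)))"
    by (rule mult_left_mono)
  also have "\<dots> \<le> 2 * real (card E) ^ 2 / sqrt (real (N choose 2))"
    unfolding real_choose_two using \<open>3 \<le> N\<close> by (intro shared_vertex_normalization) auto
  finally show ?thesis .
qed

lemma inj_homs_through_density_disjoint:
  assumes E: "E \<subseteq> vertex_pairs m" and e: "e \<in> vertex_pairs N" and e': "e' \<in> vertex_pairs N"
    and "e \<inter> e' = {}"
  shows "real N * (real N - 1) / 2 * (real (card (inj_homs_through m E N X e e')) / (\<Prod>i<m. real N - real i))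
    \<le> 6 * real (card E) ^ 2 / real (N choose 2)"
proof -
  have card_e: "card e = 2" "card e' = 2" using e e' by (auto intro: vertex_pairs_card)
  then have four: "card (e \<union> e') = 4" using assms(4) by (rule card_Un_card_2_disjoint)
  have "e \<union> e' \<subseteq> {0..<N}" using e e' vertex_pairs_subset by blast
  then have "4 \<le> N" using card_mono[of "{0..<N}" "e \<union> e'"] four by simp
  have "card ((\<lambda>\<phi>. restrict \<phi> (a \<union> b)) ` pinned_injections {0..<m} {0..<N} a b e e') \<le> 4"
    if "a \<in> E" "b \<in> E" for a b
  proof -
    have "a \<in> vertex_pairs m" "b \<in> vertex_pairs m" using that E by auto
    then have "a \<subseteq> {0..<m}" "b \<subseteq> {0..<m}" by (auto dest: vertex_pairs_subset)
    obtain p w where "p \<in> a" "w \<in> b"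
      using \<open>a \<in> vertex_pairs m\<close> \<open>b \<in> vertex_pairs m\<close> unfolding vertex_pairs_def by blast
    from card_restrict_pinned_injections_le_4[OF card_e this \<open>a \<subseteq> {0..<m}\<close> \<open>b \<subseteq> {0..<m}\<close>]
    show ?thesis .
  qed
  from inj_homs_through_density_le[OF E e e' this, of X]
  have "real (card (inj_homs_through m E N X e e')) / (\<Prod>i<m. real N - real i)
      \<le> real (card E) ^ 2 * 4 / (real N * (real N - 1) * ((real N - 2) * (real N - 3)))"
    unfolding four by (simp add: numeral_eq_Suc mult.assoc)
  moreover have "0 \<le> real N * (real N - 1) / 2" using \<open>4 \<le> N\<close> by simp
  ultimately have "real N * (real N - 1) / 2 * (real (card (inj_homs_through m E N X e e')) / (\<Prod>i<m. real N - real i))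
      \<le> real N * (real N - 1) / 2
        * (real (card E) ^ 2 * 4 / (real N * (real N - 1) * ((real N - 2) * (real N - 3))))"
    by (rule mult_left_mono)
  also have "\<dots> \<le> 6 * real (card E) ^ 2 / real (N choose 2)"
    unfolding real_choose_two using \<open>4 \<le> N\<close> by (intro disjoint_normalization) auto
  finally show ?thesis .
qed

section \<open>The mixed second difference of a subgraph-counting function\<close>

definition mixed_diff :: "('a set \<Rightarrow> real) \<Rightarrow> 'a \<Rightarrow> 'a \<Rightarrow> 'a set \<Rightarrow> real" where
  "mixed_diff F e e' G = F (insert e (insert e' G)) - F (insert e' G) - F (insert e G) + F G"

lemma mixed_diff_subgraph_count:
  assumes "e \<noteq> e'" "e \<notin> G" "e' \<notin> G"
  shows "mixed_diff (subgraph_count N l \<beta> m E) e e' G / 2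
    = (\<Sum>i=1..l. \<beta> i * (real N * (real N - 1) / 2
        * (real (card (inj_homs_through (m i) (E i) N (insert e (insert e' G)) e e'))
           / (\<Prod>j<m i. real N - real j))))"
proof -
  let ?t = "\<lambda>i S. \<beta> i * hom_density (m i) (E i) N S"
  have summand: "?t i (insert e (insert e' G)) - ?t i (insert e' G) - ?t i (insert e G) + ?t i G
    = \<beta> i * (real (card (inj_homs_through (m i) (E i) N (insert e (insert e' G)) e e'))
        / (\<Prod>j<m i. real N - real j))" for i
    unfolding hom_density_def card_inj_homs_mixed_diff[OF assms, symmetric]
    by (simp add: algebra_simps diff_divide_distrib add_divide_distrib)
  have "mixed_diff (subgraph_count N l \<beta> m E) e e' G
    = real N * (real N - 1)
      * (\<Sum>i=1..l. ?t i (insert e (insert e' G)) - ?t i (insert e' G) - ?t i (insert e G) + ?t i G)"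
    unfolding mixed_diff_def subgraph_count_def by (simp add: sum.distrib sum_subtractf algebra_simps)
  then show ?thesis unfolding summand by (simp add: sum_distrib_left mult_ac)
qed

lemma abs_sum_mult_le:
  fixes c t b :: "'i \<Rightarrow> real"
  assumes "\<And>i. i \<in> A \<Longrightarrow> 0 \<le> t i" "\<And>i. i \<in> A \<Longrightarrow> t i \<le> b i"
  shows "\<bar>\<Sum>i\<in>A. c i * t i\<bar> \<le> (\<Sum>i\<in>A. \<bar>c i\<bar> * b i)"
proof -
  have "\<bar>\<Sum>i\<in>A. c i * t i\<bar> \<le> (\<Sum>i\<in>A. \<bar>c i * t i\<bar>)" by (rule sum_abs)
  also have "\<dots> \<le> (\<Sum>i\<in>A. \<bar>c i\<bar> * b i)"
    using assms by (intro sum_mono) (simp add: abs_mult mult_left_mono)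
  finally show ?thesis .
qed

lemma abs_mixed_diff_subgraph_count_le:
  assumes "e \<noteq> e'" "e \<notin> G" "e' \<notin> G"
    and B: "\<And>i. i \<in> {1..l} \<Longrightarrow> real N * (real N - 1) / 2
      * (real (card (inj_homs_through (m i) (E i) N (insert e (insert e' G)) e e'))
         / (\<Prod>j<m i. real N - real j)) \<le> B i"
  shows "\<bar>mixed_diff (subgraph_count N l \<beta> m E) e e' G\<bar> / 2 \<le> (\<Sum>i=1..l. \<bar>\<beta> i\<bar> * B i)"
proof -
  have "0 \<le> real N * (real N - 1) / 2 * (real c / (\<Prod>j<k. real N - real j))" for c k
  proof -
    have "0 \<le> real N * (real N - 1) / 2" by (cases N) auto
    then show ?thesis using prod_diff_lessThan_nonneg[where m = k and N = N] by simp
  qed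
  then have "\<bar>mixed_diff (subgraph_count N l \<beta> m E) e e' G / 2\<bar> \<le> (\<Sum>i=1..l. \<bar>\<beta> i\<bar> * B i)"
    unfolding mixed_diff_subgraph_count[OF assms(1-3)] by (intro abs_sum_mult_le B)
  then show ?thesis by simp
qed

lemma abs_mixed_diff_subgraph_count_shared_vertex:
  assumes "\<And>i. i \<in> {1..l} \<Longrightarrow> E i \<subseteq> vertex_pairs (m i)"
    and "e \<in> vertex_pairs N" "e' \<in> vertex_pairs N" "e \<noteq> e'" "e \<inter> e' \<noteq> {}" "e \<notin> G" "e' \<notin> G"
  shows "\<bar>mixed_diff (subgraph_count N l \<beta> m E) e e' G\<bar> / 2
    \<le> (\<Sum>i=1..l. 2 * \<bar>\<beta> i\<bar> * real (card (E i)) ^ 2 / sqrt (real (N choose 2)))"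
proof -
  have "\<bar>mixed_diff (subgraph_count N l \<beta> m E) e e' G\<bar> / 2
    \<le> (\<Sum>i=1..l. \<bar>\<beta> i\<bar> * (2 * real (card (E i)) ^ 2 / sqrt (real (N choose 2))))"
    using assms by (intro abs_mixed_diff_subgraph_count_le inj_homs_through_density_shared_vertex) auto
  then show ?thesis by (simp add: mult_ac)
qed

lemma abs_mixed_diff_subgraph_count_disjoint:
  assumes "\<And>i. i \<in> {1..l} \<Longrightarrow> E i \<subseteq> vertex_pairs (m i)"
    and "e \<in> vertex_pairs N" "e' \<in> vertex_pairs N" "e \<inter> e' = {}" "e \<notin> G" "e' \<notin> G"
  shows "\<bar>mixed_diff (subgraph_count N l \<beta> m E) e e' G\<bar> / 2
    \<le> (\<Sum>i=1..l. 6 * \<bar>\<beta> i\<bar> * real (card (E i)) ^ 2 / real (N choose 2))"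
proof -
  have "e \<noteq> e'" using assms(2,4) vertex_pairs_card by fastforce
  then have "\<bar>mixed_diff (subgraph_count N l \<beta> m E) e e' G\<bar> / 2
    \<le> (\<Sum>i=1..l. \<bar>\<beta> i\<bar> * (6 * real (card (E i)) ^ 2 / real (N choose 2)))"
    using assms by (intro abs_mixed_diff_subgraph_count_le inj_homs_through_density_disjoint) auto
  then show ?thesis by (simp add: mult_ac)
qed

lemma disc_deriv_cong: "X - {e} = Y - {e} \<Longrightarrow> disc_deriv F e X = disc_deriv F e Y"
  unfolding disc_deriv_def by (metis insert_Diff_single)

lemma disc_deriv_diff_eq_mixed_diff:
  assumes "e \<noteq> e'" "e' \<in> X" "e' \<notin> Y" "X - {e'} = Y - {e'}"
  shows "disc_deriv F e X - disc_deriv F e Y = mixed_diff F e e' (X - {e, e'}) / 2"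
proof -
  have "insert e X = insert e (insert e' (X - {e, e'}))" "X - {e} = insert e' (X - {e, e'})"
    using assms(1,2) by auto
  moreover have "insert e Y = insert e (X - {e, e'})" "Y - {e} = X - {e, e'}"
    using assms(3,4) by auto
  ultimately show ?thesis unfolding disc_deriv_def mixed_diff_def by (simp add: diff_divide_distrib)
qed

lemma disc_deriv_diff_cases:
  assumes "X - {e'} = Y - {e'}"
  obtains "disc_deriv F e X = disc_deriv F e Y"
    | G where "e \<noteq> e'" "e \<notin> G" "e' \<notin> G"
      "\<bar>disc_deriv F e X - disc_deriv F e Y\<bar> = \<bar>mixed_diff F e e' G\<bar> / 2"
proof (cases "e = e' \<or> (e' \<in> X \<longleftrightarrow> e' \<in> Y)")
  case True
  then have "X - {e} = Y - {e}" using assms by blast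
  then show ?thesis by (rule that(1)[OF disc_deriv_cong])
next
  case False
  then consider "e \<noteq> e'" "e' \<in> X" "e' \<notin> Y" | "e \<noteq> e'" "e' \<in> Y" "e' \<notin> X" by blast
  then show ?thesis
  proof cases
    case 1
    show ?thesis
    proof (rule that(2)[of "X - {e, e'}"])
      show "\<bar>disc_deriv F e X - disc_deriv F e Y\<bar> = \<bar>mixed_diff F e e' (X - {e, e'})\<bar> / 2"
        unfolding disc_deriv_diff_eq_mixed_diff[OF 1 assms] by simp
    qed (use 1 in auto)
  next
    case 2
    show ?thesis
    proof (rule that(2)[of "Y - {e, e'}"])
      show "\<bar>disc_deriv F e X - disc_deriv F e Y\<bar> = \<bar>mixed_diff F e e' (Y - {e, e'})\<bar> / 2"
        unfolding abs_minus_commute[of "disc_deriv F e X"] disc_deriv_diff_eq_mixed_diff[OF 2 assms[symmetric]]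
        by simp
    qed (use 2 in auto)
  qed
qed

theorem lemma27:
  fixes N l :: nat and \<beta> :: "nat \<Rightarrow> real" and m :: "nat \<Rightarrow> nat"
    and E :: "nat \<Rightarrow> nat set set" and X Y :: "nat set set" and ej ek :: "nat set"
  assumes H: "\<And>i. i \<in> {1..l} \<Longrightarrow> E i \<subseteq> vertex_pairs (m i)"
    and X: "X \<subseteq> vertex_pairs N" and Y: "Y \<subseteq> vertex_pairs N"
    and ej: "ej \<in> vertex_pairs N" and ek: "ek \<in> vertex_pairs N"
    and XY: "\<And>e. e \<in> vertex_pairs N \<Longrightarrow> e \<noteq> ek \<Longrightarrow> (e \<in> X \<longleftrightarrow> e \<in> Y)"
  shows "(ej \<inter> ek \<noteq> {} \<longrightarrow>
            \<bar>disc_deriv (subgraph_count N l \<beta> m E) ej X - disc_deriv (subgraph_count N l \<beta> m E) ej Y\<bar>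
              \<le> (\<Sum>i=1..l. 2 * \<bar>\<beta> i\<bar> * real (card (E i))^2 / sqrt (real (N choose 2))))
       \<and> (ej \<inter> ek = {} \<longrightarrow>
            \<bar>disc_deriv (subgraph_count N l \<beta> m E) ej X - disc_deriv (subgraph_count N l \<beta> m E) ej Y\<bar>
              \<le> (\<Sum>i=1..l. 6 * \<bar>\<beta> i\<bar> * real (card (E i))^2 / real (N choose 2)))"
proof -
  let ?F = "subgraph_count N l \<beta> m E"
  have "X - {ek} = Y - {ek}" using X Y XY by blast
  then show ?thesis
  proof (cases rule: disc_deriv_diff_cases[where F = ?F and e = ej])
    case 1
    then show ?thesis by (simp add: sum_nonneg)
  next
    case (2 G)
    show ?thesis
      unfolding 2(4)
      using abs_mixed_diff_subgraph_count_shared_vertex[where \<beta> = \<beta> and E = E and m = m,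
          OF H ej ek 2(1) _ 2(2,3)]
        abs_mixed_diff_subgraph_count_disjoint[where \<beta> = \<beta> and E = E and m = m,
          OF H ej ek _ 2(2,3)]
      by blast
  qed
qed

end
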